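(* Let $m\ge n\ge1$. Let $\mathcal E=\{\sqrt{p_i}U_i\mid1\le i\le N\}$ with each $U_i$ unitary on $\mathcal H_{2^m}$ and $\sum_ip_i=1$, let $\rho_a$ be an $(m-n)$-qubit density matrix and $\rho_0$ an $m$-qubit density matrix, and suppose $[\mathcal H_{2^n},\mathcal E,\rho_a,\rho_0]$ is a private quantum channel. Then there exist unitaries $U_1',\dots,U_N'$ on $\mathcal H_{2^{n+m}}$ such that, with $\mathcal E'=\{\sqrt{p_i}U_i'\mid1\le i\le N\}$ (the same probabilities $p_i$), $[\mathcal C_{2^{2n}},\mathcal E',\rho_a,\tilde I_{2^n}\otimes\rho_0]$ is a private quantum channel.
   Context: $\mathcal{H}_{2^k}$ denotes the Hilbert space of $k$ qubits, with computational basis $|0\rangle,\dots,|2^k-1\rangle$; $\tilde I_{M}=\frac1M I_M$. $\mathcal C_k=\{|i\rangle\mid 0\le i\le k-1\}$ is the set of the first $k$ computational basis states (so $\mathcal C_{2^{2n}}$ is the set of all $2n$-qubit classical basis states). Definition (private quantum channel, PQC): let $\mathcal S\subseteq\mathcal H_{2^n}$ be a set of pure $n$-qubit states, $\mathcal E=\{\sqrt{p_i}U_i\mid1\le i\le N\}$ with each $U_i$ unitary on $\mathcal H_{2^m}$, $p_i\ge0$, $\sum_ip_i=1$, $\rho_a$ an $(m-n)$-qubit density matrix, and $\rho_0$ an $m$-qubit density matrix. Then $[\mathcal S,\mathcal E,\rho_a,\rho_0]$ is a PQC iff for all $|\phi\rangle\in\mathcal S$, $\sum_{i=1}^Np_iU_i(|\phi\rangle\langle\phi|\otimes\rho_a)U_i^\dagger=\rho_0$.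 (If $m=n$ the ancilla is absent.) *)

theory Defs
  imports Complex_Main "Jordan_Normal_Form.Matrix"
begin

text \<open>A k-qubit space H_{2^k} is modelled by complex vectors of dimension 2^k;
  operators on it are complex 2^k x 2^k matrices.\<close>

definition adj :: "complex mat \<Rightarrow> complex mat" where
  "adj A = mat (dim_col A) (dim_row A) (\<lambda>(i,j). cnj (A $$ (j,i)))"

definition trace_mat :: "complex mat \<Rightarrow> complex" where
  "trace_mat A = (\<Sum>i<dim_row A. A $$ (i,i))"

text \<open>Kronecker (tensor) product; the first factor carries the high-order index.\<close>
definition kron :: "complex mat \<Rightarrow> complex mat \<Rightarrow> complex mat" (infixl \<open>\<otimes>\<^sub>k\<close> 71) where
  "kron A B = mat (dim_row A * dim_row B) (dim_col A * dim_col B)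
     (\<lambda>(i,j). A $$ (i div dim_row B, j div dim_col B) * B $$ (i mod dim_row B, j mod dim_col B))"

definition proj :: "complex vec \<Rightarrow> complex mat" where
  "proj v = mat (dim_vec v) (dim_vec v) (\<lambda>(i,j). v $ i * cnj (v $ j))"

definition unitary :: "nat \<Rightarrow> complex mat \<Rightarrow> bool" where
  "unitary d U \<longleftrightarrow> U \<in> carrier_mat d d \<and> adj U * U = 1\<^sub>m d \<and> U * adj U = 1\<^sub>m d"

definition density :: "nat \<Rightarrow> complex mat \<Rightarrow> bool" where
  "density k \<rho> \<longleftrightarrow> \<rho> \<in> carrier_mat (2^k) (2^k) \<and> adj \<rho> = \<rho> \<and>
     (\<forall>v \<in> carrier_vec (2^k). 0 \<le> Re (\<Sum>i<2^k. \<Sum>j<2^k. cnj (v $ i) * \<rho> $$ (i,j) * v $ j)) \<and>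
     trace_mat \<rho> = 1"

definition pure_states :: "nat \<Rightarrow> complex vec set" where
  "pure_states k = {v \<in> carrier_vec (2^k). (\<Sum>i<2^k. (cmod (v $ i))^2) = 1}"

definition comp_basis :: "nat \<Rightarrow> nat \<Rightarrow> complex vec set" where
  "comp_basis d k = {unit_vec (2^d) i | i. i < k}"

definition nid :: "nat \<Rightarrow> complex mat" where
  "nid M = (1 / of_nat M) \<cdot>\<^sub>m 1\<^sub>m M"

text \<open>Output of the channel: sum_{i=1}^N p_i U_i X U_i^dagger (indices 0..N-1).\<close>
definition chan :: "nat \<Rightarrow> (nat \<Rightarrow> real) \<Rightarrow> (nat \<Rightarrow> complex mat) \<Rightarrow> complex mat \<Rightarrow> complex mat" where
  "chan N p U X = mat (dim_row X) (dim_col X)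
     (\<lambda>(r,c). \<Sum>i<N. complex_of_real (p i) * (U i * X * adj (U i)) $$ (r,c))"

text \<open>Private quantum channel [S, E, rho_a, rho_0] with S a set of n-qubit pure states,
  E = {sqrt(p_i) U_i | i < N}, U_i unitaries on m qubits, rho_a an (m-n)-qubit
  density matrix, rho_0 an m-qubit density matrix.\<close>
definition PQC :: "nat \<Rightarrow> nat \<Rightarrow> complex vec set \<Rightarrow> nat \<Rightarrow> (nat \<Rightarrow> real) \<Rightarrow>
    (nat \<Rightarrow> complex mat) \<Rightarrow> complex mat \<Rightarrow> complex mat \<Rightarrow> bool" where
  "PQC m n S N p U \<rho>a \<rho>0 \<longleftrightarrow>
     n \<le> m \<and> S \<subseteq> pure_states n \<and>
     (\<forall>i<N. 0 \<le> p i \<and> unitary (2^m) (U i)) \<and> (\<Sum>i<N. p i) = 1 \<and>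
     density (m - n) \<rho>a \<and> density m \<rho>0 \<and>
     (\<forall>\<phi>\<in>S. chan N p U (proj \<phi> \<otimes>\<^sub>k \<rho>a) = \<rho>0)"

end

theory Submission
  imports Defs "Jordan_Normal_Form.Determinant"
begin

text \<open>Write \<open>d = 2\<^sup>n\<close>. Since the channel sends \<open>|\<phi>\<rangle>\<langle>\<phi>| \<otimes> \<rho>\<^sub>a\<close> to \<open>\<rho>\<^sub>0\<close> for every
  pure state \<open>\<phi>\<close>, polarization shows that it sends \<open>X \<otimes> \<rho>\<^sub>a\<close> to \<open>tr(X) \<rho>\<^sub>0\<close> for every
  \<open>d \<times> d\<close> matrix \<open>X\<close>. Let \<open>V\<close> be the unitary whose columns are the \<open>d\<^sup>2\<close> generalized Bell
  states and put \<open>U\<^sub>i' = (I\<^sub>d \<otimes> U\<^sub>i)(V \<otimes> I)\<close>. On \<open>V|k\<rangle>\<langle>k|V\<^sup>* \<otimes> \<rho>\<^sub>a\<close> the channel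
  \<open>I\<^sub>d \<otimes> \<E>\<close> acts blockwise with respect to the first register, and the \<open>(x,x')\<close> block of
  a Bell state has trace \<open>\<delta>\<^sub>x\<^sub>x\<^sub>'/d\<close>, so every output equals \<open>I\<^sub>d/d \<otimes> \<rho>\<^sub>0\<close>.\<close>

section \<open>Finite sums and index arithmetic\<close>

lemma sum_lessThan_mult:
  fixes f :: "nat \<Rightarrow> 'a::comm_monoid_add"
  shows "(\<Sum>t<a*b. f t) = (\<Sum>u<a. \<Sum>s<b. f (u*b+s))"
proof -
  have "(\<Sum>t<a*b. f t) = (\<Sum>u<a. sum f {u*b..<u*b+b})"
    using sum.nat_group[of f b a] by simp
  also have "\<dots> = (\<Sum>u<a. \<Sum>s<b. f (u*b+s))"
  proof (rule sum.cong[OF refl])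
    fix u
    have "sum f {u*b..<u*b+b} = sum f {0+u*b..<b+u*b}" by (simp add: add.commute)
    also have "\<dots> = (\<Sum>s\<in>{0..<b}. f (s+u*b))" by (rule sum.shift_bounds_nat_ivl)
    finally show "sum f {u*b..<u*b+b} = (\<Sum>s<b. f (u*b+s))" by (simp add: atLeast0LessThan add.commute)
  qed
  finally show ?thesis .
qed

lemma sum_lessThan_eq_single:
  fixes f :: "nat \<Rightarrow> 'a::comm_monoid_add"
  assumes "a < d" and "\<And>w. w < d \<Longrightarrow> w \<noteq> a \<Longrightarrow> f w = 0"
  shows "(\<Sum>w<d. f w) = f a"
  using sum.mono_neutral_right[of "{..<d}" "{a}" f] assms by auto

lemma sum_lessThan_eq_two:
  fixes f :: "nat \<Rightarrow> 'a::comm_monoid_add"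
  assumes "a < d" "b < d" "a \<noteq> b" and "\<And>w. w < d \<Longrightarrow> w \<noteq> a \<Longrightarrow> w \<noteq> b \<Longrightarrow> f w = 0"
  shows "(\<Sum>w<d. f w) = f a + f b"
  using sum.mono_neutral_right[of "{..<d}" "{a,b}" f] assms by auto

lemma less_mult_imp_div_mod_less: "(i::nat) < a*b \<Longrightarrow> i div b < a \<and> i mod b < b"
  by (metis less_mult_imp_div_less mod_less_divisor mult_0_right not_less_zero zero_less_iff_neq_zero)

lemma mult_add_less_mult: "(u::nat) < a \<Longrightarrow> s < b \<Longrightarrow> u*b + s < a*b"
proof -
  assume u: "u < a" and s: "s < b"
  have "u*b + s < Suc u * b" using s by simp
  also have "\<dots> \<le> a*b" using u by (intro mult_le_mono1) simp
  finally show ?thesis .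
qed

lemma mult_add_div_mod_eq:
  assumes "(0::nat) < e"
  shows "(x*(d*e) + j) div e = x*d + j div e" and "(x*(d*e) + j) mod e = j mod e"
proof -
  have eq: "x*(d*e) + j = j + (x*d)*e" by (simp add: mult_ac)
  show "(x*(d*e) + j) div e = x*d + j div e" "(x*(d*e) + j) mod e = j mod e"
    unfolding eq using assms by simp_all
qed

lemma mod_add_left_cancel_less:
  assumes "b < d" "b' < d" "(x + b) mod d = (x + b') mod (d::nat)"
  shows "b = b'"
proof -
  have le: "c = c'" if "c < d" "c' < d" "c \<le> c'" "(x + c) mod d = (x + c') mod d" for c c'
  proof -
    from that have "d dvd (x + c') - (x + c)" by (metis mod_eq_dvd_iff_nat add_le_mono1 add_left_mono)
    then have "d dvd c' - c" by simp
    moreover have "c' - c < d" using that by linarith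
    ultimately have "c' - c = 0" using nat_dvd_not_less by blast
    then show ?thesis using that by simp
  qed
  show ?thesis using le[of b b'] le[of b' b] assms by (cases "b \<le> b'") auto
qed

section \<open>Adjoints, Kronecker products and unitaries\<close>

lemma index_mult_mat_sum:
  "i < dim_row A \<Longrightarrow> j < dim_col B \<Longrightarrow> dim_col A = dim_row B \<Longrightarrow>
    (A * B) $$ (i,j) = (\<Sum>t<dim_col A. A $$ (i,t) * B $$ (t,j))"
  by (simp add: scalar_prod_def atLeast0LessThan)

lemma adj_dim [simp]: "dim_row (adj A) = dim_col A" "dim_col (adj A) = dim_row A"
  by (auto simp: adj_def)

lemma adj_index [simp]: "i < dim_col A \<Longrightarrow> j < dim_row A \<Longrightarrow> adj A $$ (i,j) = cnj (A $$ (j,i))"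
  by (simp add: adj_def)

lemma adj_one [simp]: "adj (1\<^sub>m k) = 1\<^sub>m k"
  by (rule eq_matI) auto

lemma adj_carrier_mat: "A \<in> carrier_mat a b \<Longrightarrow> adj A \<in> carrier_mat b a"
  by auto

lemma adj_mult: "A \<in> carrier_mat a b \<Longrightarrow> B \<in> carrier_mat b c \<Longrightarrow> adj (A * B) = adj B * adj A"
  by (rule eq_matI) (auto simp: scalar_prod_def mult.commute intro!: sum.cong)

lemma index_mult_mult_adj:
  assumes "U \<in> carrier_mat k k" "Y \<in> carrier_mat k k" "r < k" "c < k"
  shows "(U * Y * adj U) $$ (r,c) = (\<Sum>j<k. \<Sum>l<k. U $$ (r,j) * Y $$ (j,l) * cnj (U $$ (c,l)))"
proof -
  have "(U * Y * adj U) $$ (r,c) = (\<Sum>l<k. (\<Sum>j<k. U $$ (r,j) * Y $$ (j,l)) * cnj (U $$ (c,l)))"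
    using assms by (simp add: scalar_prod_def atLeast0LessThan)
  also have "\<dots> = (\<Sum>l<k. \<Sum>j<k. U $$ (r,j) * Y $$ (j,l) * cnj (U $$ (c,l)))"
    by (simp add: sum_distrib_right)
  also have "\<dots> = (\<Sum>j<k. \<Sum>l<k. U $$ (r,j) * Y $$ (j,l) * cnj (U $$ (c,l)))"
    by (rule sum.swap)
  finally show ?thesis .
qed

lemma proj_carrier_mat [simp]: "\<phi> \<in> carrier_vec k \<Longrightarrow> proj \<phi> \<in> carrier_mat k k"
  by (simp add: proj_def)

lemma index_mult_proj_unit_mult_adj:
  assumes A: "A \<in> carrier_mat n n" and k: "k < n" and R: "R < n" and C: "C < n"
  shows "(A * proj (unit_vec n k) * adj A) $$ (R,C) = A $$ (R,k) * cnj (A $$ (C,k))"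
proof -
  have P: "proj (unit_vec n k) \<in> carrier_mat n n" by simp
  have "(A * proj (unit_vec n k) * adj A) $$ (R,C) =
      (\<Sum>j<n. \<Sum>l<n. A $$ (R,j) * proj (unit_vec n k) $$ (j,l) * cnj (A $$ (C,l)))"
    by (rule index_mult_mult_adj[OF A P R C])
  also have "\<dots> = (\<Sum>l<n. A $$ (R,k) * proj (unit_vec n k) $$ (k,l) * cnj (A $$ (C,l)))"
    by (rule sum_lessThan_eq_single) (use k in \<open>auto simp: proj_def\<close>)
  also have "\<dots> = A $$ (R,k) * proj (unit_vec n k) $$ (k,k) * cnj (A $$ (C,k))"
    by (rule sum_lessThan_eq_single) (use k in \<open>auto simp: proj_def\<close>)
  finally show ?thesis using k by (simp add: proj_def)
qed

lemma kron_dim [simp]: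
  "dim_row (A \<otimes>\<^sub>k B) = dim_row A * dim_row B" "dim_col (A \<otimes>\<^sub>k B) = dim_col A * dim_col B"
  by (auto simp: kron_def)

lemma kron_carrier_mat [simp]:
  "A \<in> carrier_mat a1 a2 \<Longrightarrow> B \<in> carrier_mat b1 b2 \<Longrightarrow> A \<otimes>\<^sub>k B \<in> carrier_mat (a1*b1) (a2*b2)"
  by auto

lemma kron_index:
  "i < dim_row A * dim_row B \<Longrightarrow> j < dim_col A * dim_col B \<Longrightarrow>
    (A \<otimes>\<^sub>k B) $$ (i,j) = A $$ (i div dim_row B, j div dim_col B) * B $$ (i mod dim_row B, j mod dim_col B)"
  by (simp add: kron_def)

lemma kron_mult:
  assumes A: "A \<in> carrier_mat a1 a2" and B: "B \<in> carrier_mat b1 b2"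
    and C: "C \<in> carrier_mat a2 a3" and D: "D \<in> carrier_mat b2 b3"
  shows "(A \<otimes>\<^sub>k B) * (C \<otimes>\<^sub>k D) = (A * C) \<otimes>\<^sub>k (B * D)"
proof (rule eq_matI)
  fix i j assume "i < dim_row ((A * C) \<otimes>\<^sub>k (B * D))" "j < dim_col ((A * C) \<otimes>\<^sub>k (B * D))"
  then have i: "i < a1*b1" and j: "j < a3*b3" using assms by auto
  have "((A \<otimes>\<^sub>k B) * (C \<otimes>\<^sub>k D)) $$ (i,j) = (\<Sum>t<a2*b2. (A \<otimes>\<^sub>k B) $$ (i,t) * (C \<otimes>\<^sub>k D) $$ (t,j))"
    using assms i j by (subst index_mult_mat_sum) auto
  also have "\<dots> = (\<Sum>u<a2. \<Sum>s<b2. (A \<otimes>\<^sub>k B) $$ (i,u*b2+s) * (C \<otimes>\<^sub>k D) $$ (u*b2+s,j))"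
    by (rule sum_lessThan_mult)
  also have "\<dots> = (\<Sum>u<a2. \<Sum>s<b2. (A $$ (i div b1, u) * C $$ (u, j div b3)) *
      (B $$ (i mod b1, s) * D $$ (s, j mod b3)))"
    using assms i j by (intro sum.cong refl) (simp add: kron_index mult_add_less_mult)
  also have "\<dots> = (\<Sum>u<a2. A $$ (i div b1, u) * C $$ (u, j div b3)) *
      (\<Sum>s<b2. B $$ (i mod b1, s) * D $$ (s, j mod b3))"
    by (simp add: sum_product)
  also have "\<dots> = ((A * C) \<otimes>\<^sub>k (B * D)) $$ (i,j)"
    using assms i j less_mult_imp_div_mod_less[OF i] less_mult_imp_div_mod_less[OF j]
    by (simp add: kron_index scalar_prod_def atLeast0LessThan)
  finally show "((A \<otimes>\<^sub>k B) * (C \<otimes>\<^sub>k D)) $$ (i,j) = ((A * C) \<otimes>\<^sub>k (B * D)) $$ (i,j)" .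
qed (use assms in auto)

lemma adj_kron: "adj (A \<otimes>\<^sub>k B) = adj A \<otimes>\<^sub>k adj B"
proof (rule eq_matI)
  fix i j assume "i < dim_row (adj A \<otimes>\<^sub>k adj B)" "j < dim_col (adj A \<otimes>\<^sub>k adj B)"
  then show "adj (A \<otimes>\<^sub>k B) $$ (i,j) = (adj A \<otimes>\<^sub>k adj B) $$ (i,j)"
    using less_mult_imp_div_mod_less[of i "dim_col A" "dim_col B"]
      less_mult_imp_div_mod_less[of j "dim_row A" "dim_row B"]
    by (simp add: kron_index)
qed auto

lemma kron_one: "1\<^sub>m a \<otimes>\<^sub>k 1\<^sub>m b = 1\<^sub>m (a*b)"
proof (rule eq_matI)
  fix i j assume "i < dim_row (1\<^sub>m (a*b))" "j < dim_col (1\<^sub>m (a*b))"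
  then have i: "i < a*b" and j: "j < a*b" by auto
  have "(i div b = j div b \<and> i mod b = j mod b) = (i = j)"
    by (metis div_mult_mod_eq)
  then show "(1\<^sub>m a \<otimes>\<^sub>k 1\<^sub>m b) $$ (i,j) = 1\<^sub>m (a*b) $$ (i,j)"
    using i j less_mult_imp_div_mod_less[OF i] less_mult_imp_div_mod_less[OF j]
    by (auto simp: kron_index)
qed auto

lemma unitary_one: "unitary k (1\<^sub>m k)"
  by (simp add: unitary_def)

lemma unitary_mult:
  assumes "unitary k A" "unitary k B"
  shows "unitary k (A * B)"
proof -
  have A: "A \<in> carrier_mat k k" "adj A \<in> carrier_mat k k" "adj A * A = 1\<^sub>m k" "A * adj A = 1\<^sub>m k"
    and B: "B \<in> carrier_mat k k" "adj B \<in> carrier_mat k k" "adj B * B = 1\<^sub>m k" "B * adj B = 1\<^sub>m k"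
    using assms by (auto simp: unitary_def)
  have "adj (A * B) * (A * B) = adj B * (adj A * A) * B"
    using A(1,2) B(1,2)
    by (simp add: adj_mult[of A k k B k] assoc_mult_mat[of _ k k _ k _ k] mult_carrier_mat[of _ k k _ k])
  also have "\<dots> = 1\<^sub>m k" using A B by (simp only: A(3)) simp
  finally have left: "adj (A * B) * (A * B) = 1\<^sub>m k" .
  have "(A * B) * adj (A * B) = A * (B * adj B) * adj A"
    using A(1,2) B(1,2)
    by (simp add: adj_mult[of A k k B k] assoc_mult_mat[of _ k k _ k _ k] mult_carrier_mat[of _ k k _ k])
  also have "\<dots> = 1\<^sub>m k" using A B by (simp only: B(4)) simp
  finally show ?thesis
    using left A B by (simp add: unitary_def)
qed

lemma unitary_kron:
  assumes "unitary a A" "unitary b B"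
  shows "unitary (a*b) (A \<otimes>\<^sub>k B)"
proof -
  have A: "A \<in> carrier_mat a a" "adj A \<in> carrier_mat a a" "adj A * A = 1\<^sub>m a" "A * adj A = 1\<^sub>m a"
    and B: "B \<in> carrier_mat b b" "adj B \<in> carrier_mat b b" "adj B * B = 1\<^sub>m b" "B * adj B = 1\<^sub>m b"
    using assms by (auto simp: unitary_def)
  show ?thesis
    unfolding unitary_def adj_kron using A B
    by (simp add: kron_mult[of "adj A" a a "adj B" b b A a B b] kron_mult[of A a a B b b "adj A" a "adj B" b] kron_one)
qed

lemma chan_carrier_mat [simp]: "X \<in> carrier_mat a b \<Longrightarrow> chan N p U X \<in> carrier_mat a b"
  by (simp add: chan_def)

lemma chan_mult_right:
  assumes A: "\<forall>i<N. A i \<in> carrier_mat k k" and B: "B \<in> carrier_mat k k" and X: "X \<in> carrier_mat k k"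
  shows "chan N p (\<lambda>i. A i * B) X = chan N p A (B * X * adj B)"
proof -
  have conj: "(A i * B) * X * adj (A i * B) = A i * (B * X * adj B) * adj (A i)" if "i < N" for i
  proof -
    have Ai: "A i \<in> carrier_mat k k" using A that by simp
    show ?thesis
      using Ai B X adj_carrier_mat[OF Ai] adj_carrier_mat[OF B]
      by (simp add: adj_mult[OF Ai B] assoc_mult_mat[of _ k k _ k _ k] mult_carrier_mat[of _ k k _ k])
  qed
  show ?thesis
    using B X by (auto simp: chan_def conj intro!: eq_matI sum.cong)
qed

section \<open>Blocks of operators on a tensor product\<close>

text \<open>The operator \<open>\<langle>x| W |x'\<rangle>\<close> on the second factor of \<open>\<complex>\<^sup>d \<otimes> \<complex>\<^sup>D\<close>.\<close>
definition tensor_block :: "nat \<Rightarrow> nat \<Rightarrow> nat \<Rightarrow> complex mat \<Rightarrow> complex mat" where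
  "tensor_block D x x' W = mat D D (\<lambda>(j,l). W $$ (x*D + j, x'*D + l))"

lemma tensor_block_carrier_mat [simp]: "tensor_block D x x' W \<in> carrier_mat D D"
  by (simp add: tensor_block_def)

lemma tensor_block_dim [simp]:
  "dim_row (tensor_block D x x' W) = D" "dim_col (tensor_block D x x' W) = D"
  by (simp_all add: tensor_block_def)

lemma tensor_block_index [simp]:
  "j < D \<Longrightarrow> l < D \<Longrightarrow> tensor_block D x x' W $$ (j,l) = W $$ (x*D + j, x'*D + l)"
  by (simp add: tensor_block_def)

lemma eq_mat_tensor_blockI:
  assumes "A \<in> carrier_mat (d*D) (d*D)" "B \<in> carrier_mat (d*D) (d*D)"
    and "\<And>x x'. x < d \<Longrightarrow> x' < d \<Longrightarrow> tensor_block D x x' A = tensor_block D x x' B"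
  shows "A = B"
proof (rule eq_matI)
  fix R C assume "R < dim_row B" "C < dim_col B"
  then have R: "R < d*D" and C: "C < d*D" using assms(2) by auto
  note Rb = less_mult_imp_div_mod_less[OF R] and Cb = less_mult_imp_div_mod_less[OF C]
  have "A $$ (R,C) = tensor_block D (R div D) (C div D) A $$ (R mod D, C mod D)"
    using Rb Cb by simp
  also have "\<dots> = tensor_block D (R div D) (C div D) B $$ (R mod D, C mod D)"
    using assms(3) Rb Cb by simp
  also have "\<dots> = B $$ (R,C)"
    using Rb Cb by simp
  finally show "A $$ (R,C) = B $$ (R,C)" .
qed (use assms in auto)

lemma tensor_block_kron:
  assumes "A \<in> carrier_mat d d" "B \<in> carrier_mat D D" "x < d" "x' < d"
  shows "tensor_block D x x' (A \<otimes>\<^sub>k B) = A $$ (x,x') \<cdot>\<^sub>m B"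
proof (rule eq_matI)
  fix j l assume "j < dim_row (A $$ (x,x') \<cdot>\<^sub>m B)" "l < dim_col (A $$ (x,x') \<cdot>\<^sub>m B)"
  then show "tensor_block D x x' (A \<otimes>\<^sub>k B) $$ (j,l) = (A $$ (x,x') \<cdot>\<^sub>m B) $$ (j,l)"
    using assms mult_add_less_mult[of x d j D] mult_add_less_mult[of x' d l D]
    by (simp add: kron_index)
qed (use assms in auto)

lemma tensor_block_kron_right:
  assumes "G \<in> carrier_mat (d*D) (d*D)" "B \<in> carrier_mat e e" "x < d" "x' < d"
  shows "tensor_block (D*e) x x' (G \<otimes>\<^sub>k B) = tensor_block D x x' G \<otimes>\<^sub>k B"
proof (rule eq_matI)
  fix j l assume "j < dim_row (tensor_block D x x' G \<otimes>\<^sub>k B)" "l < dim_col (tensor_block D x x' G \<otimes>\<^sub>k B)"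
  then have j: "j < D*e" and l: "l < D*e" using assms by auto
  then have e: "0 < e" by (cases e) auto
  have "x*(D*e) + j < d*(D*e)" "x'*(D*e) + l < d*(D*e)"
    using assms j l by (simp_all add: mult_add_less_mult)
  then show "tensor_block (D*e) x x' (G \<otimes>\<^sub>k B) $$ (j,l) = (tensor_block D x x' G \<otimes>\<^sub>k B) $$ (j,l)"
    using assms j l less_mult_imp_div_mod_less[OF j] less_mult_imp_div_mod_less[OF l]
    by (simp add: kron_index mult_add_div_mod_eq[OF e] mult.assoc)
qed (use assms in auto)

lemma tensor_block_conj_id_kron:
  assumes U: "U \<in> carrier_mat D D" and W: "W \<in> carrier_mat (d*D) (d*D)" and x: "x < d" "x' < d"
  shows "tensor_block D x x' ((1\<^sub>m d \<otimes>\<^sub>k U) * W * adj (1\<^sub>m d \<otimes>\<^sub>k U)) = U * tensor_block D x x' W * adj U"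
proof (rule eq_matI)
  fix r c assume "r < dim_row (U * tensor_block D x x' W * adj U)" "c < dim_col (U * tensor_block D x x' W * adj U)"
  then have r: "r < D" and c: "c < D" using U by auto
  let ?A = "1\<^sub>m d \<otimes>\<^sub>k U"
  have A: "?A \<in> carrier_mat (d*D) (d*D)" using U by simp
  have A_index: "?A $$ (z*D + q, y*D + j) = (if z = y then U $$ (q,j) else 0)"
    if "z < d" "q < D" "y < d" "j < D" for z q y j
    using that U mult_add_less_mult[of z d q D] mult_add_less_mult[of y d j D] by (simp add: kron_index)
  have "(?A * W * adj ?A) $$ (x*D + r, x'*D + c) =
      (\<Sum>J<d*D. \<Sum>L<d*D. ?A $$ (x*D + r, J) * W $$ (J,L) * cnj (?A $$ (x'*D + c, L)))"
    by (rule index_mult_mult_adj[OF A W]) (use x r c mult_add_less_mult in auto)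
  also have "\<dots> = (\<Sum>y<d. \<Sum>j<D. \<Sum>y'<d. \<Sum>l<D.
      ?A $$ (x*D + r, y*D + j) * W $$ (y*D + j, y'*D + l) * cnj (?A $$ (x'*D + c, y'*D + l)))"
    by (simp only: sum_lessThan_mult)
  also have "\<dots> = (\<Sum>j<D. \<Sum>y'<d. \<Sum>l<D.
      ?A $$ (x*D + r, x*D + j) * W $$ (x*D + j, y'*D + l) * cnj (?A $$ (x'*D + c, y'*D + l)))"
    by (rule sum_lessThan_eq_single) (use x r A_index in auto)
  also have "\<dots> = (\<Sum>j<D. \<Sum>l<D.
      ?A $$ (x*D + r, x*D + j) * W $$ (x*D + j, x'*D + l) * cnj (?A $$ (x'*D + c, x'*D + l)))"
    by (rule sum.cong[OF refl], rule sum_lessThan_eq_single) (use x c A_index in auto)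
  also have "\<dots> = (\<Sum>j<D. \<Sum>l<D. U $$ (r,j) * tensor_block D x x' W $$ (j,l) * cnj (U $$ (c,l)))"
    using x r c A_index by (intro sum.cong refl) auto
  also have "\<dots> = (U * tensor_block D x x' W * adj U) $$ (r,c)"
    by (rule index_mult_mult_adj[symmetric]) (use U r c in auto)
  finally show "tensor_block D x x' (?A * W * adj ?A) $$ (r,c) = (U * tensor_block D x x' W * adj U) $$ (r,c)"
    using r c by simp
qed (use U in auto)

lemma tensor_block_chan_id_kron:
  assumes U: "\<forall>i<N. U i \<in> carrier_mat D D" and W: "W \<in> carrier_mat (d*D) (d*D)" and x: "x < d" "x' < d"
  shows "tensor_block D x x' (chan N p (\<lambda>i. 1\<^sub>m d \<otimes>\<^sub>k U i) W) = chan N p U (tensor_block D x x' W)"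
proof (rule eq_matI)
  fix r c assume "r < dim_row (chan N p U (tensor_block D x x' W))" "c < dim_col (chan N p U (tensor_block D x x' W))"
  then have r: "r < D" and c: "c < D" by (simp_all add: chan_def)
  have "tensor_block D x x' (chan N p (\<lambda>i. 1\<^sub>m d \<otimes>\<^sub>k U i) W) $$ (r,c) = (\<Sum>i<N. complex_of_real (p i) *
      tensor_block D x x' ((1\<^sub>m d \<otimes>\<^sub>k U i) * W * adj (1\<^sub>m d \<otimes>\<^sub>k U i)) $$ (r,c))"
    using W x r c mult_add_less_mult[of x d r D] mult_add_less_mult[of x' d c D] by (simp add: chan_def)
  also have "\<dots> = chan N p U (tensor_block D x x' W) $$ (r,c)"
    using U W x r c by (auto simp: chan_def tensor_block_conj_id_kron intro!: sum.cong)
  finally show "tensor_block D x x' (chan N p (\<lambda>i. 1\<^sub>m d \<otimes>\<^sub>k U i) W) $$ (r,c) = chan N p U (tensor_block D x x' W) $$ (r,c)" .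
qed (simp_all add: chan_def)

section \<open>Channels on product inputs\<close>

text \<open>The (r,c) entry of the channel output on \<open>|u\<rangle>\<langle>v| \<otimes> \<rho>\<close>.\<close>
definition chan_kernel :: "nat \<Rightarrow> (nat \<Rightarrow> real) \<Rightarrow> (nat \<Rightarrow> complex mat) \<Rightarrow> complex mat \<Rightarrow>
    nat \<Rightarrow> nat \<Rightarrow> nat \<Rightarrow> nat \<Rightarrow> nat \<Rightarrow> complex" where
  "chan_kernel N p U \<rho> e r c u v = (\<Sum>i<N. complex_of_real (p i) *
     (\<Sum>s<e. \<Sum>t<e. U i $$ (r, u*e + s) * \<rho> $$ (s,t) * cnj (U i $$ (c, v*e + t))))"

lemma chan_kron_index:
  assumes U: "\<forall>i<N. U i \<in> carrier_mat (d*e) (d*e)" and X: "X \<in> carrier_mat d d"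
    and \<rho>: "\<rho> \<in> carrier_mat e e" and r: "r < d*e" and c: "c < d*e"
  shows "chan N p U (X \<otimes>\<^sub>k \<rho>) $$ (r,c) = (\<Sum>u<d. \<Sum>v<d. X $$ (u,v) * chan_kernel N p U \<rho> e r c u v)"
proof -
  have "chan N p U (X \<otimes>\<^sub>k \<rho>) $$ (r,c) = (\<Sum>i<N. complex_of_real (p i) *
      (\<Sum>J<d*e. \<Sum>L<d*e. U i $$ (r,J) * (X \<otimes>\<^sub>k \<rho>) $$ (J,L) * cnj (U i $$ (c,L))))"
    using U X \<rho> r c by (auto simp: chan_def index_mult_mult_adj intro!: sum.cong)
  also have "\<dots> = (\<Sum>i<N. complex_of_real (p i) * (\<Sum>u<d. \<Sum>s<e. \<Sum>v<d. \<Sum>t<e.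
      U i $$ (r, u*e + s) * (X $$ (u,v) * \<rho> $$ (s,t)) * cnj (U i $$ (c, v*e + t))))"
    unfolding sum_lessThan_mult using X \<rho>
    by (auto simp: kron_index mult_add_less_mult intro!: sum.cong)
  also have "\<dots> = (\<Sum>i<N. \<Sum>u<d. \<Sum>v<d. X $$ (u,v) * (complex_of_real (p i) *
      (\<Sum>s<e. \<Sum>t<e. U i $$ (r, u*e + s) * \<rho> $$ (s,t) * cnj (U i $$ (c, v*e + t)))))"
  proof (intro sum.cong refl)
    fix i
    have "(\<Sum>u<d. \<Sum>s<e. \<Sum>v<d. \<Sum>t<e. U i $$ (r, u*e + s) * (X $$ (u,v) * \<rho> $$ (s,t)) * cnj (U i $$ (c, v*e + t))) =
        (\<Sum>u<d. \<Sum>v<d. \<Sum>s<e. \<Sum>t<e. U i $$ (r, u*e + s) * (X $$ (u,v) * \<rho> $$ (s,t)) * cnj (U i $$ (c, v*e + t)))"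
      by (rule sum.cong[OF refl], rule sum.swap)
    then show "complex_of_real (p i) * (\<Sum>u<d. \<Sum>s<e. \<Sum>v<d. \<Sum>t<e.
        U i $$ (r, u*e + s) * (X $$ (u,v) * \<rho> $$ (s,t)) * cnj (U i $$ (c, v*e + t))) =
      (\<Sum>u<d. \<Sum>v<d. X $$ (u,v) * (complex_of_real (p i) *
        (\<Sum>s<e. \<Sum>t<e. U i $$ (r, u*e + s) * \<rho> $$ (s,t) * cnj (U i $$ (c, v*e + t)))))"
      by (simp add: sum_distrib_left mult_ac)
  qed
  also have "\<dots> = (\<Sum>u<d. \<Sum>v<d. \<Sum>i<N. X $$ (u,v) * (complex_of_real (p i) *
      (\<Sum>s<e. \<Sum>t<e. U i $$ (r, u*e + s) * \<rho> $$ (s,t) * cnj (U i $$ (c, v*e + t)))))"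
    by (subst sum.swap) (rule sum.cong[OF refl], rule sum.swap)
  also have "\<dots> = (\<Sum>u<d. \<Sum>v<d. X $$ (u,v) * chan_kernel N p U \<rho> e r c u v)"
    by (simp add: chan_kernel_def sum_distrib_left)
  finally show ?thesis .
qed

lemma sum_sesquilinear_single:
  fixes g :: "nat \<Rightarrow> complex"
  assumes "a < d" and "\<And>w. w < d \<Longrightarrow> w \<noteq> a \<Longrightarrow> g w = 0"
  shows "(\<Sum>u<d. \<Sum>v<d. g u * cnj (g v) * K u v) = g a * cnj (g a) * K a a"
proof -
  have "(\<Sum>v<d. g u * cnj (g v) * K u v) = g u * cnj (g a) * K u a" for u
    by (rule sum_lessThan_eq_single) (use assms in auto)
  moreover have "(\<Sum>u<d. g u * cnj (g a) * K u a) = g a * cnj (g a) * K a a"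
    by (rule sum_lessThan_eq_single) (use assms in auto)
  ultimately show ?thesis by simp
qed

lemma sum_sesquilinear_two:
  fixes g :: "nat \<Rightarrow> complex"
  assumes ab: "a < d" "b < d" "a \<noteq> b" and g: "\<And>w. w < d \<Longrightarrow> w \<noteq> a \<Longrightarrow> w \<noteq> b \<Longrightarrow> g w = 0"
  shows "(\<Sum>u<d. \<Sum>v<d. g u * cnj (g v) * K u v) =
     g a * cnj (g a) * K a a + g a * cnj (g b) * K a b + g b * cnj (g a) * K b a + g b * cnj (g b) * K b b"
proof -
  have "(\<Sum>v<d. g u * cnj (g v) * K u v) = g u * cnj (g a) * K u a + g u * cnj (g b) * K u b" for u
    by (rule sum_lessThan_eq_two) (use ab g in auto)
  moreover have "(\<Sum>u<d. g u * cnj (g a) * K u a + g u * cnj (g b) * K u b) =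
      (g a * cnj (g a) * K a a + g a * cnj (g b) * K a b) + (g b * cnj (g a) * K b a + g b * cnj (g b) * K b b)"
    by (rule sum_lessThan_eq_two) (use ab g in auto)
  ultimately show ?thesis by (simp add: add_ac)
qed

text \<open>Polarization: test with \<open>|a\<rangle>\<close>, \<open>(|a\<rangle> + |b\<rangle>)/\<surd>2\<close> and \<open>(|a\<rangle> + i|b\<rangle>)/\<surd>2\<close>.\<close>
lemma delta_if_sesquilinear_const_on_pure_states:
  fixes K :: "nat \<Rightarrow> nat \<Rightarrow> complex"
  assumes const: "\<And>\<phi>. \<phi> \<in> pure_states n \<Longrightarrow> (\<Sum>u<2^n. \<Sum>v<2^n. \<phi> $ u * cnj (\<phi> $ v) * K u v) = z"
    and a: "a < 2^n" and b: "b < 2^n"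
  shows "K a b = (if a = b then z else 0)"
proof -
  define d :: nat where "d = 2^n"
  have const_d: "(\<Sum>u<d. \<Sum>v<d. g u * cnj (g v) * K u v) = z"
    if "(\<Sum>i<d. (cmod (g i))\<^sup>2) = 1" for g
    using const[of "vec d g"] that unfolding pure_states_def d_def by simp
  have diag: "K w w = z" if w: "w < d" for w
    using const_d[of "\<lambda>x. if x = w then 1 else 0"] sum_sesquilinear_single[of w d] w
    by (simp add: sum_lessThan_eq_single[of w d])
  show ?thesis
  proof (cases "a = b")
    case True
    then show ?thesis using diag a d_def by simp
  next
    case False
    define s where "s = complex_of_real (1 / sqrt 2)"
    have ss: "s * s = 1/2" unfolding s_def by (simp flip: of_real_mult)
    have cs: "cnj s = s" unfolding s_def by simp
    have cm: "(cmod s)\<^sup>2 = 1/2" "(cmod (\<i> * s))\<^sup>2 = 1/2"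
      unfolding s_def by (simp_all add: norm_divide power_divide norm_mult)
    have ad: "a < d" "b < d" using a b d_def by auto
    let ?g1 = "\<lambda>x. if x = a then s else if x = b then s else 0"
    let ?g2 = "\<lambda>x. if x = a then s else if x = b then \<i> * s else 0"
    have "s*s*K a a + s*s*K a b + s*s*K b a + s*s*K b b = z"
      using const_d[of ?g1] sum_sesquilinear_two[of a d b ?g1 K] ad False cs cm
      by (simp add: sum_lessThan_eq_two[of a d b])
    moreover have "s*s*K a a - \<i>*(s*s)*K a b + \<i>*(s*s)*K b a + s*s*K b b = z"
      using const_d[of ?g2] sum_sesquilinear_two[of a d b ?g2 K] ad False cs cm
      by (simp add: sum_lessThan_eq_two[of a d b] algebra_simps)
    moreover have "K a a = z" "K b b = z" using diag ad by auto
    ultimately have "K a b + K b a = 0" "K b a - K a b = 0"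
      using ss by (auto simp: algebra_simps)
    then have "K a b = 0" by (simp add: algebra_simps)
    then show ?thesis using False by simp
  qed
qed

lemma chan_kron_eq_trace_smult:
  assumes U: "\<forall>i<N. U i \<in> carrier_mat (2^n*e) (2^n*e)" and \<rho>a: "\<rho>a \<in> carrier_mat e e"
    and \<rho>0: "\<rho>0 \<in> carrier_mat (2^n*e) (2^n*e)"
    and pqc: "\<forall>\<phi>\<in>pure_states n. chan N p U (proj \<phi> \<otimes>\<^sub>k \<rho>a) = \<rho>0"
    and X: "X \<in> carrier_mat (2^n) (2^n)"
  shows "chan N p U (X \<otimes>\<^sub>k \<rho>a) = trace_mat X \<cdot>\<^sub>m \<rho>0"
proof (rule eq_matI)
  fix r c assume "r < dim_row (trace_mat X \<cdot>\<^sub>m \<rho>0)" "c < dim_col (trace_mat X \<cdot>\<^sub>m \<rho>0)"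
  then have r: "r < 2^n*e" and c: "c < 2^n*e" using \<rho>0 by auto
  let ?K = "chan_kernel N p U \<rho>a e r c"
  have K: "?K u v = (if u = v then \<rho>0 $$ (r,c) else 0)" if "u < 2^n" "v < 2^n" for u v
  proof (rule delta_if_sesquilinear_const_on_pure_states[OF _ that])
    fix \<phi> assume \<phi>: "\<phi> \<in> pure_states n"
    then have \<phi>_carrier: "\<phi> \<in> carrier_vec (2^n)" by (simp add: pure_states_def)
    have "(\<Sum>u<2^n. \<Sum>v<2^n. \<phi> $ u * cnj (\<phi> $ v) * ?K u v) = chan N p U (proj \<phi> \<otimes>\<^sub>k \<rho>a) $$ (r,c)"
      using chan_kron_index[OF U _ \<rho>a r c, of "proj \<phi>"] \<phi>_carrier by (simp add: proj_def)
    then show "(\<Sum>u<2^n. \<Sum>v<2^n. \<phi> $ u * cnj (\<phi> $ v) * ?K u v) = \<rho>0 $$ (r,c)"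
      using pqc \<phi> by simp
  qed
  have "chan N p U (X \<otimes>\<^sub>k \<rho>a) $$ (r,c) = (\<Sum>u<2^n. \<Sum>v<2^n. X $$ (u,v) * ?K u v)"
    by (rule chan_kron_index[OF U X \<rho>a r c])
  also have "\<dots> = (\<Sum>u<2^n. X $$ (u,u) * \<rho>0 $$ (r,c))"
    using K by (intro sum.cong refl, subst sum_lessThan_eq_single) auto
  also have "\<dots> = (trace_mat X \<cdot>\<^sub>m \<rho>0) $$ (r,c)"
    using X \<rho>0 r c by (simp add: trace_mat_def sum_distrib_right)
  finally show "chan N p U (X \<otimes>\<^sub>k \<rho>a) $$ (r,c) = (trace_mat X \<cdot>\<^sub>m \<rho>0) $$ (r,c)" .
qed (use X \<rho>a \<rho>0 in \<open>auto simp: chan_def\<close>)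

lemma chan_id_kron_eq_nid_kron:
  assumes U: "\<forall>i<N. U i \<in> carrier_mat (d*e) (d*e)" and \<rho>a: "\<rho>a \<in> carrier_mat e e"
    and \<rho>0: "\<rho>0 \<in> carrier_mat (d*e) (d*e)"
    and trace: "\<And>X. X \<in> carrier_mat d d \<Longrightarrow> chan N p U (X \<otimes>\<^sub>k \<rho>a) = trace_mat X \<cdot>\<^sub>m \<rho>0"
    and G: "G \<in> carrier_mat (d*d) (d*d)"
    and reduced: "\<And>x x'. x < d \<Longrightarrow> x' < d \<Longrightarrow>
      trace_mat (tensor_block d x x' G) = (if x = x' then 1 / of_nat d else 0)"
  shows "chan N p (\<lambda>i. 1\<^sub>m d \<otimes>\<^sub>k U i) (G \<otimes>\<^sub>k \<rho>a) = nid d \<otimes>\<^sub>k \<rho>0"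
proof (rule eq_mat_tensor_blockI[where D = "d*e"])
  have G\<rho>a: "G \<otimes>\<^sub>k \<rho>a \<in> carrier_mat (d*(d*e)) (d*(d*e))"
    using kron_carrier_mat[OF G \<rho>a] by (simp add: mult.assoc)
  then show "chan N p (\<lambda>i. 1\<^sub>m d \<otimes>\<^sub>k U i) (G \<otimes>\<^sub>k \<rho>a) \<in> carrier_mat (d*(d*e)) (d*(d*e))"
    by simp
  show "nid d \<otimes>\<^sub>k \<rho>0 \<in> carrier_mat (d*(d*e)) (d*(d*e))"
    using \<rho>0 by (simp add: nid_def)
  fix x x' assume x: "x < d" "x' < d"
  have "tensor_block (d*e) x x' (chan N p (\<lambda>i. 1\<^sub>m d \<otimes>\<^sub>k U i) (G \<otimes>\<^sub>k \<rho>a)) =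
      chan N p U (tensor_block (d*e) x x' (G \<otimes>\<^sub>k \<rho>a))"
    by (rule tensor_block_chan_id_kron[OF U G\<rho>a x])
  also have "\<dots> = chan N p U (tensor_block d x x' G \<otimes>\<^sub>k \<rho>a)"
    using tensor_block_kron_right[OF G \<rho>a x] by simp
  also have "\<dots> = trace_mat (tensor_block d x x' G) \<cdot>\<^sub>m \<rho>0"
    by (rule trace) simp
  also have "\<dots> = tensor_block (d*e) x x' (nid d \<otimes>\<^sub>k \<rho>0)"
    using reduced[OF x] tensor_block_kron[of "nid d" d \<rho>0 "d*e" x x'] \<rho>0 x
    by (cases "x = x'") (simp_all add: nid_def)
  finally show "tensor_block (d*e) x x' (chan N p (\<lambda>i. 1\<^sub>m d \<otimes>\<^sub>k U i) (G \<otimes>\<^sub>k \<rho>a)) =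
      tensor_block (d*e) x x' (nid d \<otimes>\<^sub>k \<rho>0)" .
qed

section \<open>The generalized Bell basis\<close>

lemma sum_cnj_cis_mult_cis:
  assumes "a < d" "a' < d"
  shows "(\<Sum>x<d. cnj (cis (2*pi*real a*real x/real d)) * cis (2*pi*real a'*real x/real d)) =
    (if a = a' then of_nat d else 0)"
proof -
  define w where "w k = cis (2*pi*real k/real d)" for k :: nat
  define z where "z = cnj (w a) * w a'"
  have d: "0 < d" using assms by simp
  have unit: "cnj (w k) * w k = 1" for k
    unfolding w_def by (simp add: cis_cnj cis_mult)
  have power: "cis (2*pi*real k*real x/real d) = w k ^ x" for k x
    unfolding w_def DeMoivre by (simp add: field_simps)
  have "cnj (cis (2*pi*real a*real x/real d)) * cis (2*pi*real a'*real x/real d) = z ^ x" for x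
    unfolding z_def power by (simp add: power_mult_distrib)
  then have "(\<Sum>x<d. cnj (cis (2*pi*real a*real x/real d)) * cis (2*pi*real a'*real x/real d)) = (\<Sum>x<d. z ^ x)"
    by simp
  also have "\<dots> = (if a = a' then of_nat d else 0)"
  proof (cases "a = a'")
    case True
    then show ?thesis using unit by (simp add: z_def)
  next
    case False
    have "w a \<noteq> w a'"
      using inj_onD[OF bij_betw_imp_inj_on[OF bij_betw_roots_unity[OF d]], of a a'] assms False
      unfolding w_def by auto
    then have "z \<noteq> 1"
      using unit[of a] unfolding z_def by (metis mult.assoc mult.commute mult_1_right)
    moreover have "w k ^ d = 1" for k
      using d unfolding w_def by (simp add: DeMoivre)
    then have "z ^ d = 1"
      unfolding z_def by (simp add: power_mult_distrib flip: complex_cnj_power)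
    ultimately show ?thesis using False by (simp add: sum_gp_strict)
  qed
  finally show ?thesis .
qed

definition bell_phase :: "nat \<Rightarrow> nat \<Rightarrow> nat \<Rightarrow> complex" where
  "bell_phase d a x = cis (2*pi*real a*real x/real d) / complex_of_real (sqrt (real d))"

text \<open>Column \<open>a*d + b\<close> is the generalized Bell state
  \<open>(1/\<surd>d) \<Sum>\<^sub>x \<omega>\<^sup>a\<^sup>x |x\<rangle>|x + b mod d\<rangle>\<close> with \<open>\<omega> = e\<^sup>2\<^sup>\<pi>\<^sup>i\<^sup>/\<^sup>d\<close>.\<close>
definition bell_mat :: "nat \<Rightarrow> complex mat" where
  "bell_mat d = mat (d*d) (d*d) (\<lambda>(R,C).
     if R mod d = (R div d + C mod d) mod d then bell_phase d (C div d) (R div d) else 0)"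

lemma cnj_bell_phase_mult: "cnj (bell_phase d a x) * bell_phase d a' x =
    cnj (cis (2*pi*real a*real x/real d)) * cis (2*pi*real a'*real x/real d) / of_nat d"
  by (simp add: bell_phase_def flip: of_real_mult)

lemma sum_cnj_bell_phase_mult:
  "a < d \<Longrightarrow> a' < d \<Longrightarrow> (\<Sum>x<d. cnj (bell_phase d a x) * bell_phase d a' x) = (if a = a' then 1 else 0)"
  by (simp add: cnj_bell_phase_mult sum_cnj_cis_mult_cis flip: sum_divide_distrib)

lemma bell_phase_mult_cnj: "0 < d \<Longrightarrow> bell_phase d a x * cnj (bell_phase d a x) = 1 / of_nat d"
  by (simp add: mult.commute[of "bell_phase d a x"] cnj_bell_phase_mult cis_cnj cis_mult)

lemma bell_mat_dim [simp]: "dim_row (bell_mat d) = d*d" "dim_col (bell_mat d) = d*d"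
  by (simp_all add: bell_mat_def)

lemma bell_mat_carrier_mat [simp]: "bell_mat d \<in> carrier_mat (d*d) (d*d)"
  by (simp add: bell_mat_def)

lemma bell_mat_index:
  assumes "x < d" "y < d" "C < d*d"
  shows "bell_mat d $$ (x*d + y, C) = (if y = (x + C mod d) mod d then bell_phase d (C div d) x else 0)"
  using assms mult_add_less_mult[of x d y d] by (simp add: bell_mat_def)

lemma adj_bell_mat_mult:
  assumes d: "0 < d"
  shows "adj (bell_mat d) * bell_mat d = 1\<^sub>m (d*d)"
proof (rule eq_matI)
  fix C C' assume "C < dim_row (1\<^sub>m (d*d))" "C' < dim_col (1\<^sub>m (d*d))"
  then have C: "C < d*d" and C': "C' < d*d" by auto
  define a b a' b' where "a = C div d" "b = C mod d" "a' = C' div d" "b' = C' mod d"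
  have ab: "a < d" "b < d" "a' < d" "b' < d"
    using less_mult_imp_div_mod_less[OF C] less_mult_imp_div_mod_less[OF C'] unfolding a_b_a'_b'_def by auto
  have eq_iff: "C = C' \<longleftrightarrow> a = a' \<and> b = b'"
    unfolding a_b_a'_b'_def by (metis div_mult_mod_eq)
  have column: "(\<Sum>y<d. cnj (bell_mat d $$ (x*d + y, C)) * bell_mat d $$ (x*d + y, C')) =
      (if b = b' then cnj (bell_phase d a x) * bell_phase d a' x else 0)" if x: "x < d" for x
  proof -
    have "(\<Sum>y<d. cnj (bell_mat d $$ (x*d + y, C)) * bell_mat d $$ (x*d + y, C')) =
        cnj (bell_mat d $$ (x*d + (x + b) mod d, C)) * bell_mat d $$ (x*d + (x + b) mod d, C')"
      by (rule sum_lessThan_eq_single) (use x C C' d in \<open>auto simp: bell_mat_index a_b_a'_b'_def\<close>)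
    also have "\<dots> = (if b = b' then cnj (bell_phase d a x) * bell_phase d a' x else 0)"
      using x C C' d mod_add_left_cancel_less[of b d b' x] ab by (auto simp: bell_mat_index a_b_a'_b'_def)
    finally show ?thesis .
  qed
  have "(adj (bell_mat d) * bell_mat d) $$ (C,C') = (\<Sum>R<d*d. cnj (bell_mat d $$ (R,C)) * bell_mat d $$ (R,C'))"
    using C C' by (subst index_mult_mat_sum) (auto intro!: sum.cong)
  also have "\<dots> = (\<Sum>x<d. if b = b' then cnj (bell_phase d a x) * bell_phase d a' x else 0)"
    by (simp add: sum_lessThan_mult column)
  also have "\<dots> = 1\<^sub>m (d*d) $$ (C,C')"
    using C C' ab sum_cnj_bell_phase_mult[of a d a'] eq_iff by (cases "b = b'") auto
  finally show "(adj (bell_mat d) * bell_mat d) $$ (C,C') = 1\<^sub>m (d*d) $$ (C,C')" .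
qed auto

lemma unitary_bell_mat: "0 < d \<Longrightarrow> unitary (d*d) (bell_mat d)"
  using adj_bell_mat_mult[of d] adj_carrier_mat[OF bell_mat_carrier_mat[of d]]
    mat_mult_left_right_inverse[of "adj (bell_mat d)" "d*d" "bell_mat d"]
  by (auto simp: unitary_def)

text \<open>The reduced state of every Bell state on the first register is \<open>I/d\<close>.\<close>
lemma trace_tensor_block_bell_proj:
  assumes x: "x < d" "x' < d" and k: "k < d*d"
  shows "trace_mat (tensor_block d x x' (bell_mat d * proj (unit_vec (d*d) k) * adj (bell_mat d))) =
    (if x = x' then 1 / of_nat d else 0)"
proof -
  define a b where "a = k div d" "b = k mod d"
  have ab: "a < d" "b < d" using less_mult_imp_div_mod_less[OF k] unfolding a_b_def by auto
  have "trace_mat (tensor_block d x x' (bell_mat d * proj (unit_vec (d*d) k) * adj (bell_mat d))) =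
      (\<Sum>u<d. (bell_mat d * proj (unit_vec (d*d) k) * adj (bell_mat d)) $$ (x*d + u, x'*d + u))"
    by (simp add: trace_mat_def)
  also have "\<dots> = (\<Sum>u<d. bell_mat d $$ (x*d + u, k) * cnj (bell_mat d $$ (x'*d + u, k)))"
    by (intro sum.cong refl index_mult_proj_unit_mult_adj) (use x k in \<open>auto simp: mult_add_less_mult\<close>)
  also have "\<dots> = bell_mat d $$ (x*d + (x + b) mod d, k) * cnj (bell_mat d $$ (x'*d + (x + b) mod d, k))"
    by (rule sum_lessThan_eq_single) (use x k in \<open>auto simp: bell_mat_index a_b_def\<close>)
  also have "\<dots> = (if x = x' then 1 / of_nat d else 0)"
    using x k ab mod_add_left_cancel_less[of x d x' b] bell_phase_mult_cnj[of d a x]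
    by (auto simp: bell_mat_index a_b_def add.commute)
  finally show ?thesis .
qed

section \<open>The Bell extension of a private channel\<close>

definition bell_extension :: "nat \<Rightarrow> nat \<Rightarrow> complex mat \<Rightarrow> complex mat" where
  "bell_extension d e U = (1\<^sub>m d \<otimes>\<^sub>k U) * (bell_mat d \<otimes>\<^sub>k 1\<^sub>m e)"

lemma unitary_bell_extension:
  assumes "0 < d" "unitary (d*e) U"
  shows "unitary (d*d*e) (bell_extension d e U)"
proof -
  have "unitary (d*(d*e)) (1\<^sub>m d \<otimes>\<^sub>k U)"
    by (rule unitary_kron[OF unitary_one assms(2)])
  moreover have "unitary (d*d*e) (bell_mat d \<otimes>\<^sub>k 1\<^sub>m e)"
    by (rule unitary_kron[OF unitary_bell_mat[OF assms(1)] unitary_one])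
  ultimately show ?thesis
    unfolding bell_extension_def by (simp add: unitary_mult mult.assoc)
qed

lemma chan_bell_extension_unit_vec:
  assumes U: "\<forall>i<N. U i \<in> carrier_mat (d*e) (d*e)" and \<rho>a: "\<rho>a \<in> carrier_mat e e"
    and \<rho>0: "\<rho>0 \<in> carrier_mat (d*e) (d*e)"
    and trace: "\<And>X. X \<in> carrier_mat d d \<Longrightarrow> chan N p U (X \<otimes>\<^sub>k \<rho>a) = trace_mat X \<cdot>\<^sub>m \<rho>0"
    and k: "k < d*d"
  shows "chan N p (\<lambda>i. bell_extension d e (U i)) (proj (unit_vec (d*d) k) \<otimes>\<^sub>k \<rho>a) = nid d \<otimes>\<^sub>k \<rho>0"
proof -
  define V P where "V = bell_mat d" and "P = proj (unit_vec (d*d) k)"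
  define G where "G = V * P * adj V"
  have V: "V \<in> carrier_mat (d*d) (d*d)" and P: "P \<in> carrier_mat (d*d) (d*d)"
    and G: "G \<in> carrier_mat (d*d) (d*d)"
    using adj_carrier_mat[of V "d*d" "d*d"] by (auto simp: V_def P_def G_def)
  have V1: "V \<otimes>\<^sub>k 1\<^sub>m e \<in> carrier_mat (d*(d*e)) (d*(d*e))"
    and P\<rho>a: "P \<otimes>\<^sub>k \<rho>a \<in> carrier_mat (d*(d*e)) (d*(d*e))"
    using kron_carrier_mat[OF V one_carrier_mat[of e]] kron_carrier_mat[OF P \<rho>a] by (simp_all add: mult.assoc)
  have "chan N p (\<lambda>i. bell_extension d e (U i)) (P \<otimes>\<^sub>k \<rho>a) =
      chan N p (\<lambda>i. 1\<^sub>m d \<otimes>\<^sub>k U i) ((V \<otimes>\<^sub>k 1\<^sub>m e) * (P \<otimes>\<^sub>k \<rho>a) * adj (V \<otimes>\<^sub>k 1\<^sub>m e))"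
    using chan_mult_right[where A = "\<lambda>i. 1\<^sub>m d \<otimes>\<^sub>k U i" and k = "d*(d*e)" and B = "V \<otimes>\<^sub>k 1\<^sub>m e"] U V1 P\<rho>a
    unfolding bell_extension_def V_def by simp
  also have "(V \<otimes>\<^sub>k 1\<^sub>m e) * (P \<otimes>\<^sub>k \<rho>a) * adj (V \<otimes>\<^sub>k 1\<^sub>m e) = G \<otimes>\<^sub>k \<rho>a"
    using V P \<rho>a adj_carrier_mat[OF V]
    by (simp add: adj_kron kron_mult[of V _ _ "1\<^sub>m e" e e P _ \<rho>a e]
        kron_mult[of "V * P" "d*d" "d*d" \<rho>a e e "adj V" "d*d" "1\<^sub>m e" e] G_def)
  also have "chan N p (\<lambda>i. 1\<^sub>m d \<otimes>\<^sub>k U i) (G \<otimes>\<^sub>k \<rho>a) = nid d \<otimes>\<^sub>k \<rho>0"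
    using chan_id_kron_eq_nid_kron[OF U \<rho>a \<rho>0 trace G] trace_tensor_block_bell_proj[OF _ _ k]
    unfolding G_def V_def P_def by blast
  finally show ?thesis unfolding P_def .
qed

lemma density_nid_kron:
  assumes "density m \<rho>"
  shows "density (n+m) (nid (2^n) \<otimes>\<^sub>k \<rho>)"
proof -
  define d D where "d = (2::nat)^n" and "D = (2::nat)^m"
  have dims: "(2::nat)^(n+m) = d*D" unfolding d_def D_def by (simp add: power_add)
  have d: "0 < d" unfolding d_def by simp
  have \<rho>: "\<rho> \<in> carrier_mat D D" and hermitian: "adj \<rho> = \<rho>"
    and psd: "\<And>v. v \<in> carrier_vec D \<Longrightarrow> 0 \<le> Re (\<Sum>i<D. \<Sum>j<D. cnj (v $ i) * \<rho> $$ (i,j) * v $ j)"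
    and trace: "trace_mat \<rho> = 1"
    using assms unfolding density_def D_def by auto
  have nid: "nid d \<in> carrier_mat d d" "adj (nid d) = nid d"
    by (auto simp: nid_def intro!: eq_matI)
  have index: "(nid d \<otimes>\<^sub>k \<rho>) $$ (x*D + r, x'*D + c) = (if x = x' then 1 / of_nat d else 0) * \<rho> $$ (r,c)"
    if "x < d" "x' < d" "r < D" "c < D" for x x' r c
    using that \<rho> mult_add_less_mult[of x d r D] mult_add_less_mult[of x' d c D] by (simp add: kron_index nid_def)
  have psd_kron: "0 \<le> Re (\<Sum>i<d*D. \<Sum>j<d*D. cnj (v $ i) * (nid d \<otimes>\<^sub>k \<rho>) $$ (i,j) * v $ j)"
    if v: "v \<in> carrier_vec (d*D)" for v
  proof -
    let ?q = "\<lambda>x. \<Sum>r<D. \<Sum>c<D. cnj (v $ (x*D + r)) * \<rho> $$ (r,c) * v $ (x*D + c)"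
    have "(\<Sum>i<d*D. \<Sum>j<d*D. cnj (v $ i) * (nid d \<otimes>\<^sub>k \<rho>) $$ (i,j) * v $ j) =
        (\<Sum>x<d. \<Sum>r<D. \<Sum>x'<d. \<Sum>c<D. cnj (v $ (x*D + r)) * (nid d \<otimes>\<^sub>k \<rho>) $$ (x*D + r, x'*D + c) * v $ (x'*D + c))"
      by (simp only: sum_lessThan_mult)
    also have "\<dots> = (\<Sum>x<d. \<Sum>r<D. \<Sum>c<D. cnj (v $ (x*D + r)) * (nid d \<otimes>\<^sub>k \<rho>) $$ (x*D + r, x*D + c) * v $ (x*D + c))"
      by (rule sum.cong[OF refl], rule sum.cong[OF refl], rule sum_lessThan_eq_single) (auto simp: index)
    also have "\<dots> = (\<Sum>x<d. complex_of_real (1 / real d) * ?q x)"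
      by (simp add: index sum_distrib_left mult_ac)
    finally have "(\<Sum>i<d*D. \<Sum>j<d*D. cnj (v $ i) * (nid d \<otimes>\<^sub>k \<rho>) $$ (i,j) * v $ j) =
        (\<Sum>x<d. complex_of_real (1 / real d) * ?q x)" .
    moreover have "0 \<le> Re (?q x)" for x
      using psd[of "vec D (\<lambda>r. v $ (x*D + r))"] by simp
    ultimately show ?thesis
      by (simp add: Re_sum sum_nonneg)
  qed
  have "trace_mat (nid d \<otimes>\<^sub>k \<rho>) = (\<Sum>x<d. \<Sum>r<D. (nid d \<otimes>\<^sub>k \<rho>) $$ (x*D + r, x*D + r))"
    using nid \<rho> by (simp add: trace_mat_def sum_lessThan_mult)
  also have "\<dots> = (\<Sum>x<d. (1 / of_nat d) * trace_mat \<rho>)"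
    using \<rho> by (simp add: index trace_mat_def sum_distrib_left)
  also have "\<dots> = 1"
    using trace d by simp
  finally show ?thesis
    unfolding density_def dims d_def[symmetric] using nid \<rho> hermitian psd_kron by (simp add: adj_kron)
qed

lemma comp_basis_subset_pure_states: "k \<le> 2^n \<Longrightarrow> comp_basis n k \<subseteq> pure_states n"
proof
  fix \<phi> assume "k \<le> 2^n" "\<phi> \<in> comp_basis n k"
  then obtain j where j: "j < 2^n" and \<phi>: "\<phi> = unit_vec (2^n) j"
    by (auto simp: comp_basis_def)
  have "(\<Sum>i<2^n. (cmod (\<phi> $ i))\<^sup>2) = (cmod (\<phi> $ j))\<^sup>2"
    by (rule sum_lessThan_eq_single) (use j \<phi> in auto)
  then show "\<phi> \<in> pure_states n"
    using j \<phi> by (simp add: pure_states_def)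
qed

theorem theorem6:
  fixes m n N :: nat and p :: "nat \<Rightarrow> real" and U :: "nat \<Rightarrow> complex mat"
    and \<rho>a \<rho>0 :: "complex mat"
  assumes "1 \<le> n" and "n \<le> m"
    and "PQC m n (pure_states n) N p U \<rho>a \<rho>0"
  shows "\<exists>U' :: nat \<Rightarrow> complex mat.
           (\<forall>i<N. unitary (2^(n+m)) (U' i)) \<and>
           PQC (n + m) (2*n) (comp_basis (2*n) (2^(2*n))) N p U' \<rho>a (nid (2^n) \<otimes>\<^sub>k \<rho>0)"
proof -
  define d e where "d = (2::nat)^n" and "e = (2::nat)^(m-n)"
  have dims: "(2::nat)^m = d*e" "(2::nat)^(n+m) = d*d*e" "(2::nat)^(2*n) = d*d" "n + m - 2*n = m - n"
    using assms(2) unfolding d_def e_def by (simp_all add: mult_2 flip: power_add)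
  have U: "\<forall>i<N. unitary (d*e) (U i)" and p: "\<forall>i<N. 0 \<le> p i" "(\<Sum>i<N. p i) = 1"
    and \<rho>a: "density (m-n) \<rho>a" and \<rho>0: "density m \<rho>0"
    and pqc: "\<forall>\<phi>\<in>pure_states n. chan N p U (proj \<phi> \<otimes>\<^sub>k \<rho>a) = \<rho>0"
    using assms(3) dims(1) by (auto simp: PQC_def)
  have carriers: "\<forall>i<N. U i \<in> carrier_mat (d*e) (d*e)" "\<rho>a \<in> carrier_mat e e" "\<rho>0 \<in> carrier_mat (d*e) (d*e)"
    using U \<rho>a \<rho>0 dims(1) by (auto simp: unitary_def density_def e_def)
  have trace: "chan N p U (X \<otimes>\<^sub>k \<rho>a) = trace_mat X \<cdot>\<^sub>m \<rho>0" if "X \<in> carrier_mat d d" for X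
    using chan_kron_eq_trace_smult[of N U n e \<rho>a \<rho>0 p X] carriers pqc that unfolding d_def by simp
  let ?U' = "\<lambda>i. bell_extension d e (U i)"
  have "\<forall>i<N. unitary (2^(n+m)) (?U' i)"
    using U unitary_bell_extension[of d e] dims(2) by (simp add: d_def)
  moreover have "\<forall>\<phi>\<in>comp_basis (2*n) (2^(2*n)). chan N p ?U' (proj \<phi> \<otimes>\<^sub>k \<rho>a) = nid (2^n) \<otimes>\<^sub>k \<rho>0"
    using chan_bell_extension_unit_vec[OF carriers trace] unfolding comp_basis_def dims(3) d_def by auto
  moreover have "comp_basis (2*n) (2^(2*n)) \<subseteq> pure_states (2*n)"
    by (rule comp_basis_subset_pure_states) simp
  ultimately show ?thesis
    using assms(2) p \<rho>a density_nid_kron[OF \<rho>0, of n] unfolding PQC_def dims(4)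
    by (auto intro!: exI[of _ ?U'])
qed

end
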